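(* Suppose (P1), (P2), (P3), (P4), (A1), (A2), (A3b), (A4b) hold (same $\alpha$). Then for every $\delta>0$, $$\mathbb{P}\big[\|\dot F(\theta_k)\|_2^2\le\delta \text{ for infinitely many } k\big]=1.$$
   Context: Setting: $X$ is a random variable taking values in a measurable space $\mathcal{X}$; $f:\mathbb{R}^p\times\mathcal{X}\to\mathbb{R}$ is such that $f(\cdot,x)$ is differentiable for every $x$, with gradient in the first argument denoted $\dot f(\theta,x)$ (measurable in $x$); $F(\theta)=\mathbb{E}[f(\theta,X)]$ is finite and differentiable with gradient $\dot F(\theta)$. SGD: $\theta_0\in\mathbb{R}^p$ is fixed (deterministic), $X_1,X_2,\dots$ are i.i.d. copies of $X$, $M_0,M_1,\dots$ are deterministic $p\times p$ matrices, and $\theta_{k+1}=\theta_k - M_k\dot f(\theta_k,X_{k+1})$ for $k\ge 0$. $\lambda_{\max}(\cdot),\lambda_{\min}(\cdot)$ denote the largest and smallest eigenvalues of a symmetric matrix. (P1) Every $M_k$ is symmetric positive definite. (P2) For some $\alpha\in(0,1]$, $S:=\sum_{k=1}^\infty \lambda_{\max}(M_k)^{1+\alpha}<\infty$. (P3) $\sum_{k=1}^\infty\lambda_{\min}(M_k)=\infty$. (P4) $\lim_{k\to\infty}\lambda_{\max}(M_k)^\alpha\kappa(M_k)=0$, where $\kappa(M)=\|M\|_2\|M^{-1}\|_2$. (A1) There is $F_{l.b.}\in\mathbb{R}$ with $F(\theta)\ge F_{l.b.}$ for all $\theta$. (A2) $\mathbb{E}[\dot f(\theta,X)]=\dot F(\theta)$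 for all $\theta$. (A3b) There are $C_1,C_2\ge0$, $C_3\ge1$ with $\mathbb{E}[\|\dot f(\theta,X)\|_2^2]\le C_1+C_2(F(\theta)-F_{l.b.})+C_3\|\dot F(\theta)\|_2^2$ for all $\theta$. (A4b) $\dot F$ is globally $\alpha$-Hölder continuous: there is $L>0$ with $\|\dot F(\varphi_1)-\dot F(\varphi_2)\|_2\le L\|\varphi_1-\varphi_2\|_2^\alpha$ for all $\varphi_1,\varphi_2\in\mathbb{R}^p$. *)

theory Defs
  imports "HOL-Analysis.Analysis" "HOL-Probability.Probability"
begin

definition real_eigenvalues :: "real^'n^'n \<Rightarrow> real set" where
  "real_eigenvalues A = {l. \<exists>v. v \<noteq> 0 \<and> A *v v = l *\<^sub>R v}"

definition lambda_max :: "real^'n^'n \<Rightarrow> real" where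
  "lambda_max A = Max (real_eigenvalues A)"

definition lambda_min :: "real^'n^'n \<Rightarrow> real" where
  "lambda_min A = Min (real_eigenvalues A)"

definition sym_pos_def_mat :: "real^'n^'n \<Rightarrow> bool" where
  "sym_pos_def_mat A \<longleftrightarrow> transpose A = A \<and> (\<forall>v. v \<noteq> 0 \<longrightarrow> v \<bullet> (A *v v) > 0)"

definition op_norm2 :: "real^'n^'n \<Rightarrow> real" where
  "op_norm2 A = onorm (\<lambda>x. A *v x)"

definition cond_num :: "real^'n^'n \<Rightarrow> real" where
  "cond_num A = op_norm2 A * op_norm2 (matrix_inv A)"

primrec sgd_iter ::
  "(real^'p) \<Rightarrow> (nat \<Rightarrow> real^'p^'p) \<Rightarrow> (real^'p \<Rightarrow> 'x \<Rightarrow> real^'p) \<Rightarrow> (nat \<Rightarrow> 'w \<Rightarrow> 'x)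
     \<Rightarrow> nat \<Rightarrow> 'w \<Rightarrow> real^'p" where
  "sgd_iter th0 Ms fd X 0 \<omega> = th0"
| "sgd_iter th0 Ms fd X (Suc k) \<omega> =
     sgd_iter th0 Ms fd X k \<omega> - Ms k *v fd (sgd_iter th0 Ms fd X k \<omega>) (X (Suc k) \<omega>)"

end

theory Submission
  imports Defs
begin

text \<open>
  The optimality gap \<open>V = F - F\<^sub>l\<^sub>b\<close> serves as a Lyapunov function. Hoelder continuity of
  \<open>\<nabla>F\<close> gives the descent inequality \<open>F (\<theta> + d) \<le> F \<theta> + \<nabla>F \<theta> \<bullet> d + L \<parallel>d\<parallel>\<^sup>1\<^sup>+\<^sup>\<alpha>\<close>.
  Averaging one SGD step over the fresh sample \<open>X\<^sub>k\<^sub>+\<^sub>1\<close>, which is independent of \<open>\<theta>\<^sub>k\<close>,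
  and using (A2), (A3b) gives
  \<open>E V(\<theta>\<^sub>k\<^sub>+\<^sub>1) \<le> E V(\<theta>\<^sub>k) - \<lambda>\<^sub>m\<^sub>i\<^sub>n(M\<^sub>k) E \<parallel>\<nabla>F(\<theta>\<^sub>k)\<parallel>\<^sup>2
    + L a\<^sub>k (1 + C\<^sub>1 + C\<^sub>2 E V(\<theta>\<^sub>k) + C\<^sub>3 E \<parallel>\<nabla>F(\<theta>\<^sub>k)\<parallel>\<^sup>2)\<close>
  with \<open>a\<^sub>k = \<lambda>\<^sub>m\<^sub>a\<^sub>x(M\<^sub>k)\<^sup>1\<^sup>+\<^sup>\<alpha>\<close> summable by (P2).
  Since \<open>a\<^sub>k \<le> \<lambda>\<^sub>m\<^sub>a\<^sub>x(M\<^sub>k)\<^sup>\<alpha> \<kappa>(M\<^sub>k) \<lambda>\<^sub>m\<^sub>i\<^sub>n(M\<^sub>k)\<close>, (P4) lets half of the decrease absorb the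
  \<open>C\<^sub>3\<close> term eventually, and a deterministic Robbins--Siegmund argument yields
  \<open>\<Sum>\<^sub>k \<lambda>\<^sub>m\<^sub>i\<^sub>n(M\<^sub>k) E \<parallel>\<nabla>F(\<theta>\<^sub>k)\<parallel>\<^sup>2 < \<infinity>\<close>. So almost surely
  \<open>\<Sum>\<^sub>k \<lambda>\<^sub>m\<^sub>i\<^sub>n(M\<^sub>k) \<parallel>\<nabla>F(\<theta>\<^sub>k)\<parallel>\<^sup>2 < \<infinity>\<close>, which together with \<open>\<Sum>\<^sub>k \<lambda>\<^sub>m\<^sub>i\<^sub>n(M\<^sub>k) = \<infinity>\<close> (P3)
  forces \<open>\<parallel>\<nabla>F(\<theta>\<^sub>k)\<parallel>\<^sup>2 \<le> \<delta>\<close> infinitely often.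
\<close>

section \<open>Spectral bounds for symmetric positive definite matrices\<close>

lemma symmetric_matrix_inner_commute:
  fixes A :: "real^'n^'n"
  assumes "transpose A = A"
  shows "u \<bullet> (A *v w) = w \<bullet> (A *v u)"
proof -
  have "u \<bullet> (A *v w) = (transpose A *v u) \<bullet> w" by (simp flip: dot_lmul_matrix)
  then show ?thesis using assms by (simp add: inner_commute)
qed

lemma matrix_vector_mult_uminus_left:
  fixes A :: "real^'n^'m"
  shows "(- A) *v v = - (A *v v)"
  by (simp add: matrix_vector_mult_def vec_eq_iff sum_negf)

lemma transpose_uminus:
  fixes A :: "real^'n^'m"
  shows "transpose (- A) = - transpose A"
  by (simp add: transpose_def vec_eq_iff)

lemma quadratic_form_maximizer_is_eigenvector:
  fixes A :: "real^'n^'n"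
  assumes sym: "transpose A = A" and u: "norm u = 1"
    and max: "\<And>v. v \<bullet> (A *v v) \<le> (u \<bullet> (A *v u)) * (norm v)\<^sup>2"
  shows "A *v u = (u \<bullet> (A *v u)) *\<^sub>R u"
proof -
  define m where "m = u \<bullet> (A *v u)"
  define w where "w = A *v u - m *\<^sub>R u"
  define s where "s = w \<bullet> w"
  have uu: "u \<bullet> u = 1" using u by (simp add: dot_square_norm)
  have uw: "u \<bullet> w = 0" unfolding w_def m_def using uu by (simp add: inner_diff_right)
  have wAu: "w \<bullet> (A *v u) = s"
    unfolding s_def w_def using uw[unfolded w_def] by (simp add: inner_diff_left inner_commute)
  txt \<open>Comparing the quadratic form along the line \<open>u + t w\<close> with its maximum gives
    \<open>2 t s \<le> t\<^sup>2 c\<close> for all \<open>t\<close>, which forces \<open>s = 0\<close>.\<close>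
  define c where "c = m * s - w \<bullet> (A *v w)"
  have key: "2 * t * s \<le> t\<^sup>2 * c" for t
  proof -
    have "(u + t *\<^sub>R w) \<bullet> (A *v (u + t *\<^sub>R w)) = m + 2 * t * s + t\<^sup>2 * (w \<bullet> (A *v w))"
      using symmetric_matrix_inner_commute[OF sym, of u w] wAu unfolding m_def
      by (simp add: matrix_vector_right_distrib matrix_vector_mult_scaleR inner_add_left
          inner_add_right power2_eq_square algebra_simps)
    moreover have "(norm (u + t *\<^sub>R w))\<^sup>2 = 1 + t\<^sup>2 * s"
      using uu uw unfolding s_def power2_norm_eq_inner
      by (simp add: inner_add_left inner_add_right inner_commute power2_eq_square)
    ultimately show ?thesis
      using max[of "u + t *\<^sub>R w"] unfolding c_def m_def by (simp add: algebra_simps)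
  qed
  have "s = 0"
  proof (rule ccontr)
    assume "s \<noteq> 0"
    then have sp: "s > 0" unfolding s_def by simp
    define t where "t = s / (\<bar>c\<bar> + 1)"
    have tp: "t > 0" unfolding t_def using sp by simp
    have "2 * s \<le> t * c" using key[of t] tp by (simp add: power2_eq_square)
    moreover have "t * c \<le> t * \<bar>c\<bar>" using tp by (simp add: mult_left_mono)
    moreover have "t * \<bar>c\<bar> < s" unfolding t_def using sp by (simp add: field_simps)
    ultimately show False using sp by simp
  qed
  then show ?thesis unfolding s_def w_def m_def by simp
qed

lemma symmetric_matrix_max_quadratic_form:
  fixes A :: "real^'n^'n"
  assumes sym: "transpose A = A"
  obtains u where "norm u = 1" "\<And>v. v \<bullet> (A *v v) \<le> (u \<bullet> (A *v u)) * (norm v)\<^sup>2"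
    "A *v u = (u \<bullet> (A *v u)) *\<^sub>R u"
proof -
  let ?q = "\<lambda>v. v \<bullet> (A *v v)"
  have "continuous_on (sphere 0 1) ?q"
    by (intro continuous_intros linear_continuous_on bounded_linear_intros)
      (auto simp: matrix_vector_mul_linear linear_conv_bounded_linear)
  moreover have "sphere (0::real^'n) 1 \<noteq> {}" by simp
  ultimately obtain u where u: "u \<in> sphere 0 1"
    and umax: "\<And>y. y \<in> sphere 0 1 \<Longrightarrow> ?q y \<le> ?q u"
    using continuous_attains_sup[OF compact_sphere] by blast
  have "?q v \<le> ?q u * (norm v)\<^sup>2" for v
  proof (cases "v = 0")
    case False
    have "?q ((1 / norm v) *\<^sub>R v) \<le> ?q u" using False by (intro umax) simp
    also have "?q ((1 / norm v) *\<^sub>R v) = ?q v / (norm v)\<^sup>2"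
      by (simp add: matrix_vector_mult_scaleR power2_eq_square)
    finally show ?thesis using False by (simp add: divide_le_eq)
  qed simp
  moreover have "norm u = 1" using u by simp
  ultimately show ?thesis
    using that quadratic_form_maximizer_is_eigenvector[OF sym] by blast
qed

lemma finite_real_eigenvalues_symmetric:
  fixes A :: "real^'n^'n"
  assumes sym: "transpose A = A"
  shows "finite (real_eigenvalues A)"
proof -
  define E where "E = real_eigenvalues A"
  have "\<forall>l\<in>E. \<exists>v. v \<noteq> 0 \<and> A *v v = l *\<^sub>R v"
    unfolding E_def real_eigenvalues_def by blast
  then obtain ev where ev: "\<And>l. l \<in> E \<Longrightarrow> ev l \<noteq> 0 \<and> A *v ev l = l *\<^sub>R ev l"
    by metis
  have orth: "ev l \<bullet> ev l' = 0" if "l \<in> E" "l' \<in> E" "l \<noteq> l'" for l l'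
  proof -
    have "l * (ev l' \<bullet> ev l) = ev l' \<bullet> (A *v ev l)" using ev[OF that(1)] by simp
    also have "\<dots> = ev l \<bullet> (A *v ev l')" by (rule symmetric_matrix_inner_commute[OF sym])
    also have "\<dots> = l' * (ev l \<bullet> ev l')" using ev[OF that(2)] by simp
    finally have "(l - l') * (ev l \<bullet> ev l') = 0" by (simp add: inner_commute algebra_simps)
    then show ?thesis using that(3) by simp
  qed
  have "inj_on ev E"
  proof (rule inj_onI, rule ccontr)
    fix l l' assume "l \<in> E" "l' \<in> E" "ev l = ev l'" "l \<noteq> l'"
    then have "ev l \<bullet> ev l = 0" using orth by metis
    then show False using ev \<open>l \<in> E\<close> by simp
  qed
  moreover have "pairwise orthogonal (ev ` E)"
    unfolding pairwise_def orthogonal_def using orth by (metis imageE)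
  then have "independent (ev ` E)"
    using ev by (intro pairwise_orthogonal_independent) auto
  ultimately show ?thesis
    unfolding E_def using independent_imp_finite finite_imageD by blast
qed

locale spd_matrix =
  fixes M :: "real^'n^'n"
  assumes spd: "sym_pos_def_mat M"
begin

lemma symmetric: "transpose M = M"
  using spd unfolding sym_pos_def_mat_def by blast

lemma quadratic_form_pos: "v \<noteq> 0 \<Longrightarrow> v \<bullet> (M *v v) > 0"
  using spd unfolding sym_pos_def_mat_def by blast

lemma mult_eq_zero_iff: "M *v v = 0 \<longleftrightarrow> v = 0"
  using quadratic_form_pos by (metis inner_zero_right less_irrefl matrix_vector_mult_0_right)

lemma eigenvalue_pos:
  assumes "l \<in> real_eigenvalues M"
  shows "l > 0"
proof -
  obtain v where v: "v \<noteq> 0" "M *v v = l *\<^sub>R v"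
    using assms unfolding real_eigenvalues_def by blast
  have "0 < v \<bullet> (M *v v)" using quadratic_form_pos[OF v(1)] .
  also have "\<dots> = l * (v \<bullet> v)" using v by simp
  finally have "0 < l * (v \<bullet> v)" .
  moreover have "v \<bullet> v > 0" using v(1) by simp
  ultimately show ?thesis by (simp add: zero_less_mult_iff)
qed

lemma min_quadratic_form:
  obtains u where "u \<in> real_eigenvalues M" "\<And>v. u * (norm v)\<^sup>2 \<le> v \<bullet> (M *v v)"
proof -
  have "transpose (- M) = - M" using symmetric by (simp add: transpose_uminus)
  from symmetric_matrix_max_quadratic_form[OF this] obtain u where u: "norm u = 1"
    "\<And>v. v \<bullet> (- M *v v) \<le> (u \<bullet> (- M *v u)) * (norm v)\<^sup>2"
    "- M *v u = (u \<bullet> (- M *v u)) *\<^sub>R u" by blast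
  have "u \<noteq> 0" using u(1) by auto
  moreover have "M *v u = (u \<bullet> (M *v u)) *\<^sub>R u"
    using u(3) by (simp add: matrix_vector_mult_uminus_left)
  ultimately have "u \<bullet> (M *v u) \<in> real_eigenvalues M"
    unfolding real_eigenvalues_def by blast
  moreover have "(u \<bullet> (M *v u)) * (norm v)\<^sup>2 \<le> v \<bullet> (M *v v)" for v
    using u(2)[of v] by (simp add: matrix_vector_mult_uminus_left)
  ultimately show ?thesis using that by blast
qed

lemma finite_eigenvalues: "finite (real_eigenvalues M)"
  by (rule finite_real_eigenvalues_symmetric[OF symmetric])

lemma eigenvalues_nonempty: "real_eigenvalues M \<noteq> {}"
  using min_quadratic_form by blast

lemma lambda_min_eigenvalue: "lambda_min M \<in> real_eigenvalues M"
  unfolding lambda_min_def using finite_eigenvalues eigenvalues_nonempty by simp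

lemma lambda_max_eigenvalue: "lambda_max M \<in> real_eigenvalues M"
  unfolding lambda_max_def using finite_eigenvalues eigenvalues_nonempty by simp

lemma lambda_min_pos: "lambda_min M > 0"
  using eigenvalue_pos lambda_min_eigenvalue by blast

lemma lambda_max_pos: "lambda_max M > 0"
  using eigenvalue_pos lambda_max_eigenvalue by blast

lemma lambda_min_le: "l \<in> real_eigenvalues M \<Longrightarrow> lambda_min M \<le> l"
  unfolding lambda_min_def using finite_eigenvalues by simp

lemma lambda_max_ge: "l \<in> real_eigenvalues M \<Longrightarrow> l \<le> lambda_max M"
  unfolding lambda_max_def using finite_eigenvalues by simp

lemma lambda_min_le_quadratic_form: "lambda_min M * (norm v)\<^sup>2 \<le> v \<bullet> (M *v v)"
proof -
  obtain u where u: "u \<in> real_eigenvalues M" "\<And>v. u * (norm v)\<^sup>2 \<le> v \<bullet> (M *v v)"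
    using min_quadratic_form by blast
  have "lambda_min M * (norm v)\<^sup>2 \<le> u * (norm v)\<^sup>2"
    using lambda_min_le[OF u(1)] by (simp add: mult_right_mono)
  also have "\<dots> \<le> v \<bullet> (M *v v)" by (rule u(2))
  finally show ?thesis .
qed

text \<open>The maximum \<open>s\<^sup>2\<close> of \<open>\<parallel>M v\<parallel>\<^sup>2\<close> on the unit sphere is attained at an eigenvector \<open>u\<close> of
  \<open>M\<^sup>2\<close>; then \<open>M u + s u\<close> is an eigenvector of \<open>M\<close> for \<open>s\<close>, since positivity of \<open>M\<close>
  rules out \<open>M u = - s u\<close>.\<close>
lemma norm_mult_le_lambda_max: "norm (M *v v) \<le> lambda_max M * norm v"
proof -
  have sym2: "transpose (M ** M) = M ** M" using symmetric by (simp add: matrix_transpose_mul)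
  have quad2: "x \<bullet> ((M ** M) *v x) = (norm (M *v x))\<^sup>2" for x
    using symmetric_matrix_inner_commute[OF symmetric, of x "M *v x"]
    by (simp add: matrix_vector_mul_assoc[symmetric] power2_norm_eq_inner)
  obtain u where u: "norm u = 1"
    "\<And>v. v \<bullet> ((M ** M) *v v) \<le> (u \<bullet> ((M ** M) *v u)) * (norm v)\<^sup>2"
    "(M ** M) *v u = (u \<bullet> ((M ** M) *v u)) *\<^sub>R u"
    using symmetric_matrix_max_quadratic_form[OF sym2] by blast
  define s where "s = norm (M *v u)"
  have s_max: "(norm (M *v v))\<^sup>2 \<le> s\<^sup>2 * (norm v)\<^sup>2" for v
    using u(2)[of v] unfolding quad2 s_def .
  have MMu: "M *v (M *v u) = s\<^sup>2 *\<^sub>R u"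
    using u(3) unfolding quad2 s_def by (simp add: matrix_vector_mul_assoc)
  define w where "w = M *v u + s *\<^sub>R u"
  have "M *v w = s *\<^sub>R w"
    using MMu unfolding w_def
    by (simp add: matrix_vector_right_distrib matrix_vector_mult_scaleR power2_eq_square
        algebra_simps)
  moreover have "w \<noteq> 0"
  proof
    assume "w = 0"
    then have "u \<bullet> (M *v u) = - s"
      using u(1) unfolding w_def by (simp add: eq_neg_iff_add_eq_0[symmetric] dot_square_norm)
    moreover have "u \<noteq> 0" using u(1) by auto
    then have "u \<bullet> (M *v u) > 0" by (rule quadratic_form_pos)
    ultimately show False unfolding s_def by simp
  qed
  ultimately have "s \<le> lambda_max M"
    by (intro lambda_max_ge) (auto simp: real_eigenvalues_def)
  then have "s\<^sup>2 * (norm v)\<^sup>2 \<le> (lambda_max M * norm v)\<^sup>2"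
    unfolding s_def by (simp add: power_mult_distrib mult_right_mono power_mono)
  with s_max have "(norm (M *v v))\<^sup>2 \<le> (lambda_max M * norm v)\<^sup>2" by (rule order_trans)
  then show ?thesis using lambda_max_pos by (simp add: power2_le_iff_abs_le)
qed

lemma mult_matrix_inv: "M ** matrix_inv M = mat 1"
proof -
  have "\<forall>x. M *v x = 0 \<longrightarrow> x = 0" using mult_eq_zero_iff by blast
  then obtain B where "B ** M = mat 1" using matrix_left_invertible_ker by blast
  then have "invertible M" using invertible_left_inverse by blast
  then show ?thesis
    unfolding matrix_inv_def invertible_def
    by (rule someI_ex[where P="\<lambda>A'. M ** A' = mat 1 \<and> A' ** M = mat 1", THEN conjunct1])
qed

lemma lambda_max_le_cond_num: "lambda_max M \<le> cond_num M * lambda_min M"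
proof -
  have onorm_bound: "norm (A *v x) \<le> op_norm2 A * norm x" for A :: "real^'n^'n" and x
    unfolding op_norm2_def by (rule onorm) (simp add: linear_conv_bounded_linear)
  obtain v where v: "v \<noteq> 0" "M *v v = lambda_max M *\<^sub>R v"
    using lambda_max_eigenvalue unfolding real_eigenvalues_def by blast
  have "lambda_max M * norm v \<le> op_norm2 M * norm v"
    using onorm_bound[of M v] v lambda_max_pos by simp
  then have max_le: "lambda_max M \<le> op_norm2 M" using v by simp
  obtain w where w: "w \<noteq> 0" "M *v w = lambda_min M *\<^sub>R w"
    using lambda_min_eigenvalue unfolding real_eigenvalues_def by blast
  have "M *v (matrix_inv M *v w - (1 / lambda_min M) *\<^sub>R w) = 0"
    using w lambda_min_pos
    by (simp add: matrix_vector_mul_assoc mult_matrix_inv matrix_vector_mult_diff_distrib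
        matrix_vector_mult_scaleR)
  then have "matrix_inv M *v w = (1 / lambda_min M) *\<^sub>R w"
    unfolding mult_eq_zero_iff by simp
  then have "(1 / lambda_min M) * norm w \<le> op_norm2 (matrix_inv M) * norm w"
    using onorm_bound[of "matrix_inv M" w] lambda_min_pos by simp
  moreover have "norm w > 0" using w by simp
  ultimately have inv_le: "1 / lambda_min M \<le> op_norm2 (matrix_inv M)"
    by (rule mult_right_le_imp_le)
  have "lambda_max M / lambda_min M = lambda_max M * (1 / lambda_min M)" by simp
  also have "\<dots> \<le> cond_num M"
    unfolding cond_num_def using max_le inv_le lambda_max_pos lambda_min_pos
    by (intro mult_mono) auto
  finally show ?thesis using lambda_min_pos by (simp add: divide_le_eq)
qed

end

section \<open>Functions with Hoelder continuous gradient\<close>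

lemma powr_one_plus_le_one_plus_square:
  fixes t \<alpha> :: real
  assumes "0 \<le> t" "0 \<le> \<alpha>" "\<alpha> \<le> 1"
  shows "t powr (1 + \<alpha>) \<le> 1 + t\<^sup>2"
proof (cases "t \<le> 1")
  case True
  then have "t powr (1 + \<alpha>) \<le> 1" using assms by (intro powr_le1) auto
  then show ?thesis by (simp add: add_increasing2)
next
  case False
  then have "t powr (1 + \<alpha>) \<le> t powr 2" using assms by (intro powr_mono) auto
  also have "\<dots> = t\<^sup>2" using False by (simp add: powr_numeral)
  finally show ?thesis by simp
qed

lemma holder_continuous:
  fixes G :: "'a::real_normed_vector \<Rightarrow> 'b::real_normed_vector"
  assumes holder: "\<And>a b. norm (G a - G b) \<le> L * norm (a - b) powr \<alpha>" and "\<alpha> > 0"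
  shows "continuous_on UNIV G"
proof -
  have "((\<lambda>x. G x - G a) \<longlongrightarrow> 0) (at a)" for a
  proof (rule Lim_null_comparison)
    show "\<forall>\<^sub>F x in at a. norm (G x - G a) \<le> L * norm (x - a) powr \<alpha>"
      using holder by simp
    have "((\<lambda>x. norm (x - a)) \<longlongrightarrow> 0) (at a)"
      by (rule tendsto_norm_zero[OF LIM_zero[OF tendsto_ident_at]])
    then have "((\<lambda>x. norm (x - a) powr \<alpha>) \<longlongrightarrow> 0) (at a)"
      using \<open>\<alpha> > 0\<close> by (intro tendsto_zero_powrI) auto
    then show "((\<lambda>x. L * norm (x - a) powr \<alpha>) \<longlongrightarrow> 0) (at a)"
      using tendsto_mult[OF tendsto_const, of _ 0 _ L] by simp
  qed
  then show ?thesis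
    by (simp add: continuous_at_imp_continuous_on isCont_def LIM_zero_iff)
qed

lemma holder_gradient_descent_inequality:
  fixes F :: "'a::real_inner \<Rightarrow> real" and G :: "'a \<Rightarrow> 'a"
  assumes deriv: "\<And>\<theta>. (F has_derivative (\<lambda>h. G \<theta> \<bullet> h)) (at \<theta>)"
    and holder: "\<And>a b. norm (G a - G b) \<le> L * norm (a - b) powr \<alpha>"
    and "\<alpha> > 0" "L \<ge> 0"
  shows "F (\<theta> + d) \<le> F \<theta> + G \<theta> \<bullet> d + L * norm d powr (1 + \<alpha>)"
proof -
  have deriv_line: "DERIV (\<lambda>t. F (\<theta> + t *\<^sub>R d)) t :> G (\<theta> + t *\<^sub>R d) \<bullet> d" for t
  proof -
    have "((\<lambda>t. \<theta> + t *\<^sub>R d) has_derivative (\<lambda>x. x *\<^sub>R d)) (at t)"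
      by (auto intro!: derivative_eq_intros)
    from has_derivative_compose[OF this deriv]
    show ?thesis unfolding has_field_derivative_def by (simp add: mult.commute[of _ "G _ \<bullet> d"])
  qed
  obtain z where z: "0 < z" "z < 1"
    and mvt: "F (\<theta> + 1 *\<^sub>R d) - F (\<theta> + 0 *\<^sub>R d) = (1 - 0) * (G (\<theta> + z *\<^sub>R d) \<bullet> d)"
    using MVT2[of 0 1 "\<lambda>t. F (\<theta> + t *\<^sub>R d)", OF _ deriv_line] by auto
  have "G (\<theta> + z *\<^sub>R d) \<bullet> d = G \<theta> \<bullet> d + (G (\<theta> + z *\<^sub>R d) - G \<theta>) \<bullet> d"
    by (simp add: inner_diff_left)
  also have "(G (\<theta> + z *\<^sub>R d) - G \<theta>) \<bullet> d \<le> norm (G (\<theta> + z *\<^sub>R d) - G \<theta>) * norm d"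
    by (rule norm_cauchy_schwarz)
  also have "\<dots> \<le> (L * norm (z *\<^sub>R d) powr \<alpha>) * norm d"
    using holder[of "\<theta> + z *\<^sub>R d" \<theta>] by (intro mult_right_mono) auto
  also have "\<dots> \<le> (L * norm d powr \<alpha>) * norm d"
    using z assms(3,4)
    by (intro mult_right_mono mult_left_mono powr_mono2) (auto intro: mult_left_le_one_le)
  also have "\<dots> = L * norm d powr (1 + \<alpha>)"
    by (cases "d = 0") (auto simp: powr_add)
  finally show ?thesis using mvt by simp
qed

text \<open>A descent step of length \<open>s\<close> along \<open>-G \<theta>\<close>, with \<open>L s\<^sup>\<alpha> = 1/2\<close>, cannot go below the
  lower bound; for \<open>\<parallel>G \<theta>\<parallel> \<ge> 1\<close> this gives \<open>s \<parallel>G \<theta>\<parallel>\<^sup>2 / 2 \<le> F \<theta> - Flb\<close>.\<close>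
lemma holder_gradient_norm_bound:
  fixes F :: "'a::real_inner \<Rightarrow> real" and G :: "'a \<Rightarrow> 'a"
  assumes descent: "\<And>\<theta> d. F (\<theta> + d) \<le> F \<theta> + G \<theta> \<bullet> d + L * norm d powr (1 + \<alpha>)"
    and lower: "\<And>\<theta>. Flb \<le> F \<theta>" and "0 < \<alpha>" "\<alpha> \<le> 1" "0 < L"
  shows "(norm (G \<theta>))\<^sup>2 \<le> 1 + 2 / (1 / (2 * L)) powr (1 / \<alpha>) * (F \<theta> - Flb)"
proof -
  define s where "s = (1 / (2 * L)) powr (1 / \<alpha>)"
  define g where "g = norm (G \<theta>)"
  have s_pos: "s > 0" unfolding s_def using assms by simp
  have s_powr: "s powr (1 + \<alpha>) = s / (2 * L)"
    unfolding s_def using assms by (simp add: powr_add powr_powr)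
  have gap: "F \<theta> - Flb \<ge> 0" using lower[of \<theta>] by simp
  show ?thesis
  proof (cases "g \<ge> 1")
    case False
    then have "g\<^sup>2 \<le> 1" unfolding g_def by (simp add: abs_square_le_1)
    moreover have "0 \<le> 2 / s * (F \<theta> - Flb)" using s_pos gap by simp
    ultimately show ?thesis unfolding g_def s_def by linarith
  next
    case True
    have "Flb \<le> F (\<theta> + (- s) *\<^sub>R G \<theta>)" by (rule lower)
    also have "\<dots> \<le> F \<theta> + G \<theta> \<bullet> ((- s) *\<^sub>R G \<theta>) + L * norm ((- s) *\<^sub>R G \<theta>) powr (1 + \<alpha>)"
      by (rule descent)
    also have "G \<theta> \<bullet> ((- s) *\<^sub>R G \<theta>) = - s * g\<^sup>2"
      unfolding g_def by (simp add: power2_norm_eq_inner)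
    also have "norm ((- s) *\<^sub>R G \<theta>) powr (1 + \<alpha>) = s / (2 * L) * g powr (1 + \<alpha>)"
      unfolding g_def using s_pos by (simp add: powr_mult s_powr)
    also have "g powr (1 + \<alpha>) \<le> g\<^sup>2"
      using True assms by (simp add: powr_mono flip: powr_numeral)
    finally have "Flb \<le> F \<theta> - s * g\<^sup>2 + L * (s / (2 * L) * g\<^sup>2)"
      using assms s_pos by (simp add: mult_left_mono)
    then have "g\<^sup>2 \<le> 2 / s * (F \<theta> - Flb)"
      using assms s_pos by (simp add: field_simps)
    then show ?thesis unfolding g_def s_def by linarith
  qed
qed

section \<open>A deterministic Robbins--Siegmund lemma\<close>

text \<open>The quantity \<open>e\<^sub>n + (\<Sum>i<n. b\<^sub>i) + 1\<close> grows at most by the factor \<open>1 + a\<^sub>n\<close> per step,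
  hence stays below \<open>(e\<^sub>K + 1) exp (\<Sum>a)\<close>.\<close>
lemma suminf_less_top_of_perturbed_recursion:
  fixes e b :: "nat \<Rightarrow> ennreal" and a :: "nat \<Rightarrow> real"
  assumes a_nonneg: "\<And>k. 0 \<le> a k" and a_summable: "summable a" and e_fin: "e K < \<infinity>"
    and recursion: "\<And>k. K \<le> k \<Longrightarrow> e (Suc k) + b k \<le> ennreal (1 + a k) * e k + ennreal (a k)"
  shows "(\<Sum>k. b (k + K)) < \<infinity>"
proof -
  define W where "W n = e (n + K) + (\<Sum>i<n. b (i + K)) + 1" for n
  have W_step: "W (Suc n) \<le> ennreal (1 + a (n + K)) * W n" for n
  proof -
    define c where "c = ennreal (1 + a (n + K))"
    define S where "S = (\<Sum>i<n. b (i + K))"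
    have S_le: "S \<le> c * S"
      using mult_right_mono[of 1 c S] a_nonneg unfolding c_def by (simp add: ennreal_ge_1)
    have a_plus_1: "ennreal (a (n + K)) + 1 = c"
      unfolding c_def using a_nonneg by (simp add: ennreal_plus[symmetric] add.commute)
    have "W (Suc n) = (e (Suc (n + K)) + b (n + K)) + S + 1"
      unfolding W_def S_def by (simp add: add_ac)
    also have "\<dots> \<le> (c * e (n + K) + ennreal (a (n + K))) + S + 1"
      unfolding c_def by (intro add_right_mono recursion) simp
    also have "\<dots> = c * e (n + K) + S + c"
      by (simp add: a_plus_1[symmetric] add_ac)
    also have "\<dots> \<le> c * e (n + K) + c * S + c"
      using S_le by (intro add_right_mono add_left_mono)
    also have "\<dots> = c * W n"
      unfolding W_def S_def[symmetric] by (simp add: distrib_left)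
    finally show ?thesis unfolding c_def .
  qed
  have W_bound: "W n \<le> W 0 * ennreal (\<Prod>i<n. 1 + a (i + K))" for n
  proof (induction n)
    case (Suc n)
    have "W (Suc n) \<le> ennreal (1 + a (n + K)) * (W 0 * ennreal (\<Prod>i<n. 1 + a (i + K)))"
      using W_step[of n] Suc.IH by (meson mult_left_mono order_trans zero_le)
    also have "\<dots> = W 0 * ennreal (\<Prod>i<Suc n. 1 + a (i + K))"
      using a_nonneg by (simp add: ennreal_mult' prod_nonneg mult_ac)
    finally show ?case .
  qed simp
  define A where "A = (\<Sum>k. a (k + K))"
  have partial_le_A: "(\<Sum>i<n. a (i + K)) \<le> A" for n
    unfolding A_def using a_nonneg a_summable
    by (auto intro!: sum_le_suminf simp: summable_iff_shift)
  have prod_le: "(\<Prod>i<n. 1 + a (i + K)) \<le> exp A" for n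
  proof -
    have "(\<Prod>i<n. 1 + a (i + K)) \<le> (\<Prod>i<n. exp (a (i + K)))"
      using a_nonneg exp_ge_add_one_self by (intro prod_mono) (auto simp: add.commute)
    also have "\<dots> = exp (\<Sum>i<n. a (i + K))" by (simp add: exp_sum)
    also have "\<dots> \<le> exp A" using partial_le_A by simp
    finally show ?thesis .
  qed
  have partial_le: "(\<Sum>i<n. b (i + K)) \<le> W 0 * ennreal (exp A)" for n
  proof -
    have "(\<Sum>i<n. b (i + K)) \<le> W n" unfolding W_def by (simp add: add.assoc)
    also have "\<dots> \<le> W 0 * ennreal (exp A)"
      using W_bound[of n] prod_le[of n] by (meson ennreal_leI mult_left_mono order_trans zero_le)
    finally show ?thesis .
  qed
  have "(\<Sum>k. b (k + K)) \<le> W 0 * ennreal (exp A)"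
    by (rule suminf_le_const[OF summableI partial_le])
  also have "\<dots> < \<infinity>" using e_fin unfolding W_def by (simp add: ennreal_mult_less_top)
  finally show ?thesis .
qed

lemma not_summable_if_partial_sums_at_top:
  fixes l :: "nat \<Rightarrow> real"
  assumes "\<And>k. 0 \<le> l k" and "filterlim (\<lambda>n. \<Sum>k=1..n. l k) at_top at_top"
  shows "\<not> summable l"
proof
  assume "summable l"
  then have "(\<Sum>k=1..n. l k) \<le> suminf l" for n
    using assms(1) by (intro sum_le_suminf) auto
  moreover obtain n where "suminf l + 1 \<le> (\<Sum>k=1..n. l k)"
    using assms(2) unfolding filterlim_at_top eventually_sequentially by blast
  ultimately have "suminf l + 1 \<le> suminf l" by (meson order.trans)
  then show False by simp
qed

lemma frequently_le_of_summable_weighted: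
  fixes l g :: "nat \<Rightarrow> real"
  assumes l_nonneg: "\<And>k. 0 \<le> l k" and "\<not> summable l"
    and weighted: "summable (\<lambda>k. l k * g k)" and "0 < \<delta>"
  shows "\<exists>\<^sub>\<infinity>k. g k \<le> \<delta>"
proof (rule ccontr)
  assume "\<not> (\<exists>\<^sub>\<infinity>k. g k \<le> \<delta>)"
  then obtain N where N: "\<And>k. N \<le> k \<Longrightarrow> \<delta> < g k"
    unfolding not_frequently cofinite_eq_sequentially eventually_sequentially by force
  have "summable l"
  proof (rule summable_comparison_test')
    show "summable (\<lambda>k. l k * g k / \<delta>)" using weighted by (rule summable_divide)
    show "norm (l k) \<le> l k * g k / \<delta>" if "N \<le> k" for k
    proof -
      have "l k * \<delta> \<le> l k * g k"
        using N[OF that] l_nonneg[of k] by (intro mult_left_mono) auto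
      then show ?thesis using l_nonneg[of k] \<open>0 < \<delta>\<close> by (simp add: field_simps)
    qed
  qed
  with \<open>\<not> summable l\<close> show False by contradiction
qed

section \<open>Measurability and independence\<close>

text \<open>Jointly measurable since it is the pointwise limit of its compositions with the
  grid roundings \<open>\<theta> \<mapsto> \<lfloor>(n+1) \<theta>\<rfloor> / (n+1)\<close>, which take countably many values.\<close>
lemma borel_measurable_caratheodory:
  fixes f :: "real^'p \<Rightarrow> 'x \<Rightarrow> real"
  assumes meas: "\<And>\<theta>. f \<theta> \<in> borel_measurable P"
    and cont: "\<And>x. x \<in> space P \<Longrightarrow> continuous_on UNIV (\<lambda>\<theta>. f \<theta> x)"
  shows "(\<lambda>z. f (fst z) (snd z)) \<in> borel_measurable (borel \<Otimes>\<^sub>M P)"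
proof (rule borel_measurable_LIMSEQ_metric)
  define q where "q n \<theta> = (\<chi> i. real_of_int \<lfloor>real (Suc n) * \<theta> $ i\<rfloor> / real (Suc n))"
    for n and \<theta> :: "real^'p"
  have q_lim: "(\<lambda>n. q n \<theta>) \<longlonglongrightarrow> \<theta>" for \<theta>
  proof (rule vec_tendstoI)
    fix i
    have lower: "\<theta> $ i - 1 / real (Suc n) \<le> q n \<theta> $ i" for n
    proof -
      have "real (Suc n) * \<theta> $ i - 1 \<le> real_of_int \<lfloor>real (Suc n) * \<theta> $ i\<rfloor>" by linarith
      then have "(real (Suc n) * \<theta> $ i - 1) / real (Suc n) \<le> q n \<theta> $ i"
        unfolding q_def by (simp add: divide_right_mono del: of_nat_Suc)
      then show ?thesis by (simp add: field_simps del: of_nat_Suc)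
    qed
    have upper: "q n \<theta> $ i \<le> \<theta> $ i" for n
    proof -
      have "real_of_int \<lfloor>real (Suc n) * \<theta> $ i\<rfloor> \<le> real (Suc n) * \<theta> $ i" by linarith
      then have "real_of_int \<lfloor>real (Suc n) * \<theta> $ i\<rfloor> / real (Suc n)
          \<le> real (Suc n) * \<theta> $ i / real (Suc n)"
        by (intro divide_right_mono) auto
      then show ?thesis unfolding q_def by (simp del: of_nat_Suc)
    qed
    have "(\<lambda>n. \<theta> $ i - 1 / real (Suc n)) \<longlonglongrightarrow> \<theta> $ i - 0"
      by (intro tendsto_diff tendsto_const LIMSEQ_inverse_real_of_nat[unfolded inverse_eq_divide])
    then have lim: "(\<lambda>n. \<theta> $ i - 1 / real (Suc n)) \<longlonglongrightarrow> \<theta> $ i" by simp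
    have ev_lower: "\<forall>\<^sub>F n in sequentially. \<theta> $ i - 1 / real (Suc n) \<le> q n \<theta> $ i"
      using lower by simp
    have ev_upper: "\<forall>\<^sub>F n in sequentially. q n \<theta> $ i \<le> \<theta> $ i"
      using upper by simp
    show "(\<lambda>n. q n \<theta> $ i) \<longlonglongrightarrow> \<theta> $ i"
      by (rule tendsto_sandwich[OF ev_lower ev_upper lim tendsto_const])
  qed
  show "(\<lambda>n. f (q n (fst z)) (snd z)) \<longlonglongrightarrow> f (fst z) (snd z)"
    if "z \<in> space (borel \<Otimes>\<^sub>M P)" for z
  proof -
    have "snd z \<in> space P" using that by (auto simp: space_pair_measure)
    then have "isCont (\<lambda>\<theta>. f \<theta> (snd z)) (fst z)"
      using cont continuous_on_eq_continuous_at by blast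
    then show ?thesis using q_lim by (rule isCont_tendsto_compose)
  qed
  fix n
  define k where "k z = (\<lambda>i. \<lfloor>real (Suc n) * fst z $ i\<rfloor>)" for z :: "(real^'p) \<times> 'x"
  define g where "g c z = f (\<chi> i. real_of_int (c i) / real (Suc n)) (snd z)"
    for c :: "'p \<Rightarrow> int" and z :: "(real^'p) \<times> 'x"
  have [measurable]: "(\<lambda>z::(real^'p) \<times> 'x. fst z $ i) \<in> borel_measurable (borel \<Otimes>\<^sub>M P)" for i
  proof -
    have "(\<lambda>x::real^'p. x $ i) \<in> borel_measurable borel"
      by (intro borel_measurable_continuous_onI continuous_on_component continuous_on_id)
    then show ?thesis by (rule measurable_compose[OF measurable_fst])
  qed
  have k_meas: "k \<in> measurable (borel \<Otimes>\<^sub>M P) (count_space UNIV)"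
    unfolding measurable_count_space_eq2_countable
  proof safe
    fix c :: "'p \<Rightarrow> int"
    have "k -` {c} \<inter> space (borel \<Otimes>\<^sub>M P)
        = {z \<in> space (borel \<Otimes>\<^sub>M P). \<forall>i. \<lfloor>real (Suc n) * fst z $ i\<rfloor> = c i}"
      unfolding k_def by (auto simp: fun_eq_iff)
    also have "\<dots> \<in> sets (borel \<Otimes>\<^sub>M P)" by measurable
    finally show "k -` {c} \<inter> space (borel \<Otimes>\<^sub>M P) \<in> sets (borel \<Otimes>\<^sub>M P)" .
  qed simp
  have "g c \<in> borel_measurable (borel \<Otimes>\<^sub>M P)" for c
    unfolding g_def using meas by measurable
  then have "(\<lambda>z. g (k z) z) \<in> borel_measurable (borel \<Otimes>\<^sub>M P)"
    by (rule measurable_compose_countable'[OF _ k_meas]) simp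
  moreover have "(\<lambda>z. f (q n (fst z)) (snd z)) = (\<lambda>z. g (k z) z)"
    unfolding q_def g_def k_def by simp
  ultimately show "(\<lambda>z. f (q n (fst z)) (snd z)) \<in> borel_measurable (borel \<Otimes>\<^sub>M P)"
    by simp
qed

lemma difference_quotient_tendsto:
  fixes g :: "'a::real_inner \<Rightarrow> real"
  assumes "(g has_derivative (\<lambda>h. D \<bullet> h)) (at \<theta>)"
  shows "(\<lambda>n. real (Suc n) * (g (\<theta> + (1 / real (Suc n)) *\<^sub>R b) - g \<theta>)) \<longlonglongrightarrow> D \<bullet> b"
proof -
  have "((\<lambda>t. \<theta> + t *\<^sub>R b) has_derivative (\<lambda>t. t *\<^sub>R b)) (at 0)"
    by (auto intro!: derivative_eq_intros)
  moreover have "(g has_derivative (\<lambda>h. D \<bullet> h)) (at (\<theta> + 0 *\<^sub>R b))" using assms by simp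
  ultimately have "((\<lambda>t. g (\<theta> + t *\<^sub>R b)) has_derivative (\<lambda>t. D \<bullet> (t *\<^sub>R b))) (at 0)"
    by (rule has_derivative_compose)
  then have "DERIV (\<lambda>t. g (\<theta> + t *\<^sub>R b)) 0 :> D \<bullet> b"
    unfolding has_field_derivative_def by (simp add: mult.commute[of _ "D \<bullet> b"])
  then have "((\<lambda>h. (g (\<theta> + h *\<^sub>R b) - g \<theta>) / h) \<longlongrightarrow> D \<bullet> b) (at 0)"
    unfolding DERIV_def by simp
  moreover have "filterlim (\<lambda>n. 1 / real (Suc n)) (at 0) sequentially"
    using LIMSEQ_inverse_real_of_nat by (intro filterlim_atI) (auto simp: inverse_eq_divide)
  ultimately have "(\<lambda>n. (g (\<theta> + (1 / real (Suc n)) *\<^sub>R b) - g \<theta>) / (1 / real (Suc n))) \<longlonglongrightarrow> D \<bullet> b"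
    by (rule filterlim_compose)
  then show ?thesis by (simp add: mult.commute)
qed

lemma borel_measurable_gradient_pair:
  fixes f :: "real^'p \<Rightarrow> 'x \<Rightarrow> real" and fd :: "real^'p \<Rightarrow> 'x \<Rightarrow> real^'p"
  assumes meas: "\<And>\<theta>. f \<theta> \<in> borel_measurable P"
    and deriv: "\<And>\<theta> x. x \<in> space P \<Longrightarrow> ((\<lambda>t. f t x) has_derivative (\<lambda>h. fd \<theta> x \<bullet> h)) (at \<theta>)"
  shows "(\<lambda>z. fd (fst z) (snd z)) \<in> borel_measurable (borel \<Otimes>\<^sub>M P)"
proof -
  have "continuous_on UNIV (\<lambda>\<theta>. f \<theta> x)" if "x \<in> space P" for x
    using deriv[OF that]
    by (intro continuous_at_imp_continuous_on ballI has_derivative_continuous) blast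
  then have joint: "(\<lambda>z. f (fst z) (snd z)) \<in> borel_measurable (borel \<Otimes>\<^sub>M P)"
    using meas by (rule borel_measurable_caratheodory[rotated])
  show ?thesis
  proof (rule borel_measurable_euclidean_space[THEN iffD2], intro ballI)
    fix b :: "real^'p"
    let ?quot = "\<lambda>n z. real (Suc n)
      * (f (fst z + (1 / real (Suc n)) *\<^sub>R b) (snd z) - f (fst z) (snd z))"
    show "(\<lambda>z. fd (fst z) (snd z) \<bullet> b) \<in> borel_measurable (borel \<Otimes>\<^sub>M P)"
    proof (rule borel_measurable_LIMSEQ_metric)
      fix n
      have "(\<lambda>z::(real^'p) \<times> 'x. (fst z + (1 / real (Suc n)) *\<^sub>R b, snd z))
          \<in> measurable (borel \<Otimes>\<^sub>M P) (borel \<Otimes>\<^sub>M P)"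
        by (intro measurable_Pair borel_measurable_add measurable_fst measurable_snd
            borel_measurable_scaleR borel_measurable_const)
      from measurable_compose[OF this joint]
      show "?quot n \<in> borel_measurable (borel \<Otimes>\<^sub>M P)"
        using joint by (intro borel_measurable_times borel_measurable_diff) auto
    next
      fix z :: "(real^'p) \<times> 'x"
      assume "z \<in> space (borel \<Otimes>\<^sub>M P)"
      then have "snd z \<in> space P" by (auto simp: space_pair_measure)
      then show "(\<lambda>n. ?quot n z) \<longlonglongrightarrow> fd (fst z) (snd z) \<bullet> b"
        by (intro difference_quotient_tendsto deriv)
    qed
  qed
qed

lemma sgd_iter_cong:
  assumes "\<And>i. 1 \<le> i \<Longrightarrow> i \<le> k \<Longrightarrow> Y i \<omega> = Y' i \<omega>'"
  shows "sgd_iter th0 Ms fd Y k \<omega> = sgd_iter th0 Ms fd Y' k \<omega>'"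
  using assms by (induction k) auto

lemma borel_measurable_matrix_vector_mult: "(\<lambda>v. A *v v) \<in> borel_measurable borel"
  for A :: "real^'n^'m"
  by (intro borel_measurable_continuous_onI linear_continuous_on)
    (simp add: linear_conv_bounded_linear)

lemma measurable_sgd_iter:
  assumes fd: "(\<lambda>z. fd (fst z) (snd z)) \<in> borel_measurable (borel \<Otimes>\<^sub>M P)"
    and Y: "\<And>i. 1 \<le> i \<Longrightarrow> i \<le> k \<Longrightarrow> Y i \<in> measurable N P"
  shows "sgd_iter th0 Ms fd Y k \<in> borel_measurable N"
  using Y
proof (induction k)
  case (Suc k)
  have "(\<lambda>\<omega>. (sgd_iter th0 Ms fd Y k \<omega>, Y (Suc k) \<omega>)) \<in> measurable N (borel \<Otimes>\<^sub>M P)"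
    using Suc by (intro measurable_Pair) auto
  from measurable_compose[OF this fd]
  have "(\<lambda>\<omega>. fd (sgd_iter th0 Ms fd Y k \<omega>) (Y (Suc k) \<omega>)) \<in> borel_measurable N" by simp
  then have "(\<lambda>\<omega>. Ms k *v fd (sgd_iter th0 Ms fd Y k \<omega>) (Y (Suc k) \<omega>)) \<in> borel_measurable N"
    by (rule measurable_compose[OF _ borel_measurable_matrix_vector_mult])
  with Suc show ?case by (simp add: borel_measurable_diff)
next
  case 0
  have "sgd_iter th0 Ms fd Y 0 = (\<lambda>_. th0)" by auto
  then show ?case by simp
qed

lemma (in prob_space) nn_integral_indep_var_pair:
  assumes ind: "indep_var N1 U N2 W" and h: "h \<in> borel_measurable (N1 \<Otimes>\<^sub>M N2)"
  shows "(\<integral>\<^sup>+\<omega>. h (U \<omega>, W \<omega>) \<partial>M) = (\<integral>\<^sup>+\<omega>. (\<integral>\<^sup>+\<omega>'. h (U \<omega>, W \<omega>') \<partial>M) \<partial>M)"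
proof -
  have U: "U \<in> measurable M N1" and W: "W \<in> measurable M N2"
    using ind by (auto dest: indep_var_rv1 indep_var_rv2)
  define DU where "DU = distr M N1 U"
  define DW where "DW = distr M N2 W"
  interpret DW: prob_space DW unfolding DW_def by (rule prob_space_distr[OF W])
  have joint: "distr M (N1 \<Otimes>\<^sub>M N2) (\<lambda>\<omega>. (U \<omega>, W \<omega>)) = DU \<Otimes>\<^sub>M DW"
    using ind unfolding indep_var_distribution_eq DU_def DW_def by simp
  have "sets (DU \<Otimes>\<^sub>M DW) = sets (N1 \<Otimes>\<^sub>M N2)"
    unfolding DU_def DW_def by (intro sets_pair_measure_cong) auto
  then have h': "h \<in> borel_measurable (DU \<Otimes>\<^sub>M DW)"
    using h measurable_cong_sets by blast
  have inner: "(\<integral>\<^sup>+y. h (U \<omega>, y) \<partial>DW) = (\<integral>\<^sup>+\<omega>'. h (U \<omega>, W \<omega>') \<partial>M)" if "\<omega> \<in> space M" for \<omega>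
  proof -
    have "U \<omega> \<in> space N1" using U that by (rule measurable_space)
    with h have "(\<lambda>y. h (U \<omega>, y)) \<in> borel_measurable N2"
      by (rule measurable_Pair2)
    then show ?thesis unfolding DW_def by (simp add: nn_integral_distr[OF W])
  qed
  have "(\<integral>\<^sup>+\<omega>. h (U \<omega>, W \<omega>) \<partial>M) = integral\<^sup>N (distr M (N1 \<Otimes>\<^sub>M N2) (\<lambda>\<omega>. (U \<omega>, W \<omega>))) h"
    using U W h by (intro nn_integral_distr[symmetric] measurable_Pair) auto
  also have "\<dots> = (\<integral>\<^sup>+u. (\<integral>\<^sup>+y. h (u, y) \<partial>DW) \<partial>DU)"
    unfolding joint by (rule DW.nn_integral_fst[OF h', symmetric])
  also have "\<dots> = (\<integral>\<^sup>+\<omega>. (\<integral>\<^sup>+y. h (U \<omega>, y) \<partial>DW) \<partial>M)"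
    unfolding DU_def using DW.borel_measurable_nn_integral_fst[OF h']
    by (intro nn_integral_distr[OF U]) (simp add: DU_def)
  also have "\<dots> = (\<integral>\<^sup>+\<omega>. (\<integral>\<^sup>+\<omega>'. h (U \<omega>, W \<omega>') \<partial>M) \<partial>M)"
    using inner by (rule nn_integral_cong)
  finally show ?thesis .
qed

section \<open>The SGD recursion\<close>

locale sgd_setting = prob_space M
  for M :: "'w measure" +
  fixes P :: "'x measure"
    and X :: "nat \<Rightarrow> 'w \<Rightarrow> 'x"
    and f :: "real^'p \<Rightarrow> 'x \<Rightarrow> real"
    and fdot :: "real^'p \<Rightarrow> 'x \<Rightarrow> real^'p"
    and Fdot :: "real^'p \<Rightarrow> real^'p"
    and Ms :: "nat \<Rightarrow> real^'p^'p"
    and th0 :: "real^'p"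
    and \<alpha> Flb C1 C2 C3 L :: real
  assumes P_prob: "prob_space P"
    and X_meas: "\<And>i. X i \<in> measurable M P"
    and X_dist: "\<And>i. i \<ge> 1 \<Longrightarrow> distr M P (X i) = P"
    and X_indep: "prob_space.indep_vars M (\<lambda>_. P) X {1..}"
    and f_diff: "\<And>\<theta> x. x \<in> space P \<Longrightarrow> ((\<lambda>t. f t x) has_derivative (\<lambda>h. fdot \<theta> x \<bullet> h)) (at \<theta>)"
    and fdot_meas: "\<And>\<theta>. fdot \<theta> \<in> borel_measurable P"
    and F_finite: "\<And>\<theta>. integrable P (f \<theta>)"
    and F_diff: "\<And>\<theta>. ((\<lambda>t. \<integral>x. f t x \<partial>P) has_derivative (\<lambda>h. Fdot \<theta> \<bullet> h)) (at \<theta>)"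
    and alpha: "0 < \<alpha>" "\<alpha> \<le> 1"
    and P1: "\<And>k. sym_pos_def_mat (Ms k)"
    and P2: "summable (\<lambda>k. lambda_max (Ms (Suc k)) powr (1 + \<alpha>))"
    and P3: "filterlim (\<lambda>n. \<Sum>k=1..n. lambda_min (Ms k)) at_top at_top"
    and P4: "(\<lambda>k. lambda_max (Ms k) powr \<alpha> * cond_num (Ms k)) \<longlonglongrightarrow> 0"
    and A1: "\<And>\<theta>. (\<integral>x. f \<theta> x \<partial>P) \<ge> Flb"
    and A2: "\<And>\<theta>. has_bochner_integral P (fdot \<theta>) (Fdot \<theta>)"
    and A3b_const: "C1 \<ge> 0" "C2 \<ge> 0" "C3 \<ge> 1"
    and A3b: "\<And>\<theta>. (\<integral>\<^sup>+ x. ennreal ((norm (fdot \<theta> x))\<^sup>2) \<partial>P)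
                 \<le> ennreal (C1 + C2 * ((\<integral>x. f \<theta> x \<partial>P) - Flb) + C3 * (norm (Fdot \<theta>))\<^sup>2)"
    and A4b: "L > 0" "\<And>\<phi>1 \<phi>2. norm (Fdot \<phi>1 - Fdot \<phi>2) \<le> L * norm (\<phi>1 - \<phi>2) powr \<alpha>"
begin

definition V :: "real^'p \<Rightarrow> real" where
  "V \<theta> = (\<integral>x. f \<theta> x \<partial>P) - Flb"

abbreviation iterate :: "nat \<Rightarrow> 'w \<Rightarrow> real^'p" where
  "iterate \<equiv> sgd_iter th0 Ms fdot X"

definition step_weight :: "nat \<Rightarrow> real" where
  "step_weight k = lambda_max (Ms k) powr (1 + \<alpha>)"

definition grad_sq_const :: real where
  "grad_sq_const = 2 / (1 / (2 * L)) powr (1 / \<alpha>)"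

lemma spd_Ms: "spd_matrix (Ms k)"
  using P1 by unfold_locales

lemma V_nonneg: "0 \<le> V \<theta>"
  using A1 unfolding V_def by simp

lemma grad_sq_const_pos: "0 < grad_sq_const"
  unfolding grad_sq_const_def using A4b(1) by simp

lemma step_weight_nonneg: "0 \<le> step_weight k"
  unfolding step_weight_def by simp

lemma step_weight_summable: "summable step_weight"
  using summable_Suc_iff[of "\<lambda>k. lambda_max (Ms k) powr (1 + \<alpha>)"] P2
  unfolding step_weight_def[abs_def] by simp

lemma lambda_min_pos: "0 < lambda_min (Ms k)"
  using spd_matrix.lambda_min_pos[OF spd_Ms] .

lemma V_descent: "V (\<theta> + d) \<le> V \<theta> + Fdot \<theta> \<bullet> d + L * norm d powr (1 + \<alpha>)"
  unfolding V_def
  using holder_gradient_descent_inequality[OF F_diff A4b(2) alpha(1), of \<theta> d] A4b(1) by simp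

lemma gradient_norm_le: "(norm (Fdot \<theta>))\<^sup>2 \<le> 1 + grad_sq_const * V \<theta>"
  using holder_gradient_norm_bound[of "\<lambda>\<theta>. \<integral>x. f \<theta> x \<partial>P" Fdot L \<alpha> Flb, OF _ A1 alpha A4b(1)]
    holder_gradient_descent_inequality[OF F_diff A4b(2) alpha(1)] A4b(1)
  unfolding grad_sq_const_def V_def by simp

lemma borel_measurable_V: "V \<in> borel_measurable borel"
proof -
  have "continuous_on UNIV (\<lambda>\<theta>. \<integral>x. f \<theta> x \<partial>P)"
    using F_diff by (intro continuous_at_imp_continuous_on ballI has_derivative_continuous) blast
  then show ?thesis
    unfolding V_def[abs_def] by (intro borel_measurable_continuous_onI continuous_intros)
qed

lemma borel_measurable_Fdot: "Fdot \<in> borel_measurable borel"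
  using holder_continuous[OF A4b(2) alpha(1)] by (rule borel_measurable_continuous_onI)

lemma fdot_pair_measurable: "(\<lambda>z. fdot (fst z) (snd z)) \<in> borel_measurable (borel \<Otimes>\<^sub>M P)"
  using F_finite f_diff by (intro borel_measurable_gradient_pair) auto

lemma borel_measurable_iterate: "iterate k \<in> borel_measurable M"
  using fdot_pair_measurable X_meas by (rule measurable_sgd_iter)

text \<open>The iterate \<open>\<theta>\<^sub>k\<close> is a measurable function \<open>\<Phi>\<close> of \<open>(X\<^sub>1, \<dots>, X\<^sub>k)\<close>, which is independent
  of \<open>X\<^sub>k\<^sub>+\<^sub>1\<close>.\<close>
lemma nn_integral_iterate_next_sample:
  assumes g: "g \<in> borel_measurable (borel \<Otimes>\<^sub>M P)"
  shows "(\<integral>\<^sup>+\<omega>. g (iterate k \<omega>, X (Suc k) \<omega>) \<partial>M) = (\<integral>\<^sup>+\<omega>. (\<integral>\<^sup>+x. g (iterate k \<omega>, x) \<partial>P) \<partial>M)"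
proof -
  let ?R = "\<lambda>I \<omega>. restrict (\<lambda>i. X i \<omega>) I"
  let ?\<Phi> = "sgd_iter th0 Ms fdot (\<lambda>i y. y i) k"
  define h where "h y = g (?\<Phi> (fst y), snd y (Suc k))" for y
  have \<Phi>_restrict: "?\<Phi> (?R {1..k} \<omega>) = iterate k \<omega>" for \<omega>
    by (rule sgd_iter_cong) auto
  have ind: "indep_var (PiM {1..k} (\<lambda>_. P)) (?R {1..k}) (PiM {Suc k} (\<lambda>_. P)) (?R {Suc k})"
    using X_indep by (intro indep_var_restrict) auto
  have "?\<Phi> \<in> borel_measurable (PiM {1..k} (\<lambda>_. P))"
    using fdot_pair_measurable by (rule measurable_sgd_iter) auto
  moreover have "(\<lambda>y. y (Suc k)) \<in> measurable (PiM {Suc k} (\<lambda>_. P)) P"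
    by (rule measurable_component_singleton) simp
  ultimately have "h \<in> borel_measurable (PiM {1..k} (\<lambda>_. P) \<Otimes>\<^sub>M PiM {Suc k} (\<lambda>_. P))"
    unfolding h_def using g by measurable
  from nn_integral_indep_var_pair[OF ind this]
  have "(\<integral>\<^sup>+\<omega>. g (iterate k \<omega>, X (Suc k) \<omega>) \<partial>M)
      = (\<integral>\<^sup>+\<omega>. (\<integral>\<^sup>+\<omega>'. g (iterate k \<omega>, X (Suc k) \<omega>') \<partial>M) \<partial>M)"
    unfolding h_def fst_conv snd_conv \<Phi>_restrict by simp
  also have "\<dots> = (\<integral>\<^sup>+\<omega>. (\<integral>\<^sup>+x. g (iterate k \<omega>, x) \<partial>P) \<partial>M)"
  proof (rule nn_integral_cong)
    fix \<omega>
    have "(\<lambda>x. g (iterate k \<omega>, x)) \<in> borel_measurable P"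
      using g by (rule measurable_Pair2) simp
    then show "(\<integral>\<^sup>+\<omega>'. g (iterate k \<omega>, X (Suc k) \<omega>') \<partial>M) = (\<integral>\<^sup>+x. g (iterate k \<omega>, x) \<partial>P)"
      using nn_integral_distr[OF X_meas, of _ "Suc k"] X_dist[of "Suc k"] by simp
  qed
  finally show ?thesis .
qed

definition step_bound :: "nat \<Rightarrow> real^'p \<Rightarrow> real" where
  "step_bound k \<theta> = V \<theta> - lambda_min (Ms k) * (norm (Fdot \<theta>))\<^sup>2
     + L * step_weight k * (1 + C1 + C2 * V \<theta> + C3 * (norm (Fdot \<theta>))\<^sup>2)"

definition V_next :: "nat \<Rightarrow> real^'p \<Rightarrow> ennreal" where
  "V_next k \<theta> = (\<integral>\<^sup>+x. ennreal (V (\<theta> - Ms k *v fdot \<theta> x)) \<partial>P)"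

lemma V_after_step_le:
  "V (\<theta> - Ms k *v w) \<le> V \<theta> - Fdot \<theta> \<bullet> (Ms k *v w) + L * step_weight k * (1 + (norm w)\<^sup>2)"
proof -
  interpret Mk: spd_matrix "Ms k" by (rule spd_Ms)
  have "norm (Ms k *v w) powr (1 + \<alpha>) \<le> (lambda_max (Ms k) * norm w) powr (1 + \<alpha>)"
    using Mk.norm_mult_le_lambda_max alpha by (intro powr_mono2) auto
  also have "\<dots> = step_weight k * norm w powr (1 + \<alpha>)"
    unfolding step_weight_def using Mk.lambda_max_pos by (simp add: powr_mult)
  also have "\<dots> \<le> step_weight k * (1 + (norm w)\<^sup>2)"
    using step_weight_nonneg alpha powr_one_plus_le_one_plus_square[of "norm w" \<alpha>]
    by (intro mult_left_mono) auto
  finally have "L * norm (- (Ms k *v w)) powr (1 + \<alpha>) \<le> L * step_weight k * (1 + (norm w)\<^sup>2)"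
    using A4b(1) by (simp add: mult.assoc mult_left_mono)
  then show ?thesis
    using V_descent[of \<theta> "- (Ms k *v w)"] by simp
qed

lemma fdot_sq_integrable: "integrable P (\<lambda>x. (norm (fdot \<theta> x))\<^sup>2)"
proof (rule integrableI_nonneg)
  show "(\<integral>\<^sup>+x. ennreal ((norm (fdot \<theta> x))\<^sup>2) \<partial>P) < \<infinity>"
    using A3b[of \<theta>] by (auto intro: le_less_trans)
qed (use fdot_meas in auto)

lemma fdot_sq_mean_le:
  "(\<integral>x. (norm (fdot \<theta> x))\<^sup>2 \<partial>P) \<le> C1 + C2 * V \<theta> + C3 * (norm (Fdot \<theta>))\<^sup>2"
proof -
  have "ennreal (\<integral>x. (norm (fdot \<theta> x))\<^sup>2 \<partial>P) = (\<integral>\<^sup>+x. ennreal ((norm (fdot \<theta> x))\<^sup>2) \<partial>P)"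
    by (rule nn_integral_eq_integral[OF fdot_sq_integrable, symmetric]) auto
  also have "\<dots> \<le> ennreal (C1 + C2 * V \<theta> + C3 * (norm (Fdot \<theta>))\<^sup>2)"
    using A3b[of \<theta>] unfolding V_def .
  finally show ?thesis
    using A3b_const V_nonneg[of \<theta>] by (simp del: ennreal_plus)
qed

lemma
  shows step_bound_nonneg: "0 \<le> step_bound k \<theta>"
    and V_next_le_step_bound: "V_next k \<theta> \<le> ennreal (step_bound k \<theta>)"
proof -
  interpret P: prob_space P by (rule P_prob)
  interpret Mk: spd_matrix "Ms k" by (rule spd_Ms)
  let ?w = "fdot \<theta>" and ?G = "Fdot \<theta>"
  have w_int: "integrable P ?w" using A2[of \<theta>] by (rule integrable.intros)
  have w_mean: "(\<integral>x. ?w x \<partial>P) = ?G" using A2[of \<theta>] by (rule has_bochner_integral_integral_eq)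
  define R where "R x = V \<theta> - (?G v* Ms k) \<bullet> ?w x + L * step_weight k * (1 + (norm (?w x))\<^sup>2)"
    for x
  have V_le_R: "V (\<theta> - Ms k *v ?w x) \<le> R x" for x
    using V_after_step_le[of \<theta> k "?w x"] unfolding R_def by (simp add: dot_lmul_matrix)
  have R_nonneg: "0 \<le> R x" for x
    using V_le_R[of x] V_nonneg[of "\<theta> - Ms k *v ?w x"] by linarith
  have R_int: "integrable P R"
    unfolding R_def using w_int fdot_sq_integrable
    by (intro Bochner_Integration.integrable_add Bochner_Integration.integrable_diff
        integrable_mult_right) auto
  have "(\<integral>x. R x \<partial>P)
      = V \<theta> - (?G v* Ms k) \<bullet> ?G + L * step_weight k * (1 + (\<integral>x. (norm (?w x))\<^sup>2 \<partial>P))"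
    unfolding R_def using w_int fdot_sq_integrable w_mean
    by (simp add: Bochner_Integration.integral_add Bochner_Integration.integral_diff
        integral_mult_right P.prob_space)
  moreover have "lambda_min (Ms k) * (norm ?G)\<^sup>2 \<le> (?G v* Ms k) \<bullet> ?G"
    using Mk.lambda_min_le_quadratic_form by (simp add: dot_lmul_matrix)
  moreover have "L * step_weight k * (1 + (\<integral>x. (norm (?w x))\<^sup>2 \<partial>P))
      \<le> L * step_weight k * (1 + C1 + C2 * V \<theta> + C3 * (norm ?G)\<^sup>2)"
    using fdot_sq_mean_le[of \<theta>] step_weight_nonneg[of k] A4b(1)
    by (intro mult_left_mono) auto
  ultimately have R_mean: "(\<integral>x. R x \<partial>P) \<le> step_bound k \<theta>"
    unfolding step_bound_def by linarith
  moreover have "0 \<le> (\<integral>x. R x \<partial>P)" using R_nonneg by simp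
  ultimately show "0 \<le> step_bound k \<theta>" by linarith
  have "V_next k \<theta> \<le> (\<integral>\<^sup>+x. ennreal (R x) \<partial>P)"
    unfolding V_next_def using V_le_R by (intro nn_integral_mono ennreal_leI)
  also have "\<dots> = ennreal (\<integral>x. R x \<partial>P)"
    using R_int R_nonneg by (intro nn_integral_eq_integral) auto
  also have "\<dots> \<le> ennreal (step_bound k \<theta>)" using R_mean by (rule ennreal_leI)
  finally show "V_next k \<theta> \<le> ennreal (step_bound k \<theta>)" .
qed

definition late_rate :: real where
  "late_rate = L * (1 + C1 + C2)"

lemma late_rate_nonneg: "0 \<le> late_rate"
  unfolding late_rate_def using A4b(1) A3b_const by simp

lemma step_bound_le:
  "step_bound k \<theta>
    \<le> (1 + L * step_weight k * (C2 + C3 * grad_sq_const)) * V \<theta> + L * step_weight k * (1 + C1 + C3)"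
proof -
  have "L * step_weight k * (C3 * (norm (Fdot \<theta>))\<^sup>2)
      \<le> L * step_weight k * (C3 * (1 + grad_sq_const * V \<theta>))"
    using gradient_norm_le[of \<theta>] step_weight_nonneg[of k] A4b(1) A3b_const
    by (intro mult_left_mono) auto
  moreover have "0 \<le> lambda_min (Ms k) * (norm (Fdot \<theta>))\<^sup>2"
    using lambda_min_pos[of k] by simp
  ultimately show ?thesis
    unfolding step_bound_def by (simp add: algebra_simps)
qed

lemma step_bound_le_late:
  assumes small: "L * C3 * step_weight k \<le> lambda_min (Ms k) / 2"
  shows "step_bound k \<theta> + lambda_min (Ms k) / 2 * (norm (Fdot \<theta>))\<^sup>2
    \<le> (1 + late_rate * step_weight k) * V \<theta> + late_rate * step_weight k"
proof -
  have "L * C3 * step_weight k * (norm (Fdot \<theta>))\<^sup>2 \<le> lambda_min (Ms k) / 2 * (norm (Fdot \<theta>))\<^sup>2"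
    using small by (rule mult_right_mono) simp
  moreover have "0 \<le> L * step_weight k * ((1 + C1) * V \<theta> + C2)"
    using step_weight_nonneg[of k] A4b(1) A3b_const V_nonneg[of \<theta>] by simp
  ultimately show ?thesis
    unfolding step_bound_def late_rate_def by (simp add: algebra_simps)
qed

text \<open>Here (P4) enters, through \<open>\<lambda>\<^sub>m\<^sub>a\<^sub>x(M) \<le> \<kappa>(M) \<lambda>\<^sub>m\<^sub>i\<^sub>n(M)\<close>.\<close>
lemma eventually_step_small: "\<exists>K. \<forall>k\<ge>K. L * C3 * step_weight k \<le> lambda_min (Ms k) / 2"
proof -
  have "0 < 1 / (2 * L * C3)" using A4b(1) A3b_const by simp
  from order_tendstoD(2)[OF P4 this] obtain K where
    K: "\<And>k. K \<le> k \<Longrightarrow> lambda_max (Ms k) powr \<alpha> * cond_num (Ms k) < 1 / (2 * L * C3)"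
    unfolding eventually_sequentially by blast
  have "L * C3 * step_weight k \<le> lambda_min (Ms k) / 2" if "K \<le> k" for k
  proof -
    interpret Mk: spd_matrix "Ms k" by (rule spd_Ms)
    have "step_weight k = lambda_max (Ms k) powr \<alpha> * lambda_max (Ms k)"
      unfolding step_weight_def using Mk.lambda_max_pos by (simp add: powr_add)
    also have "\<dots> \<le> lambda_max (Ms k) powr \<alpha> * (cond_num (Ms k) * lambda_min (Ms k))"
      using Mk.lambda_max_le_cond_num by (intro mult_left_mono) auto
    also have "\<dots> = lambda_max (Ms k) powr \<alpha> * cond_num (Ms k) * lambda_min (Ms k)"
      by (simp add: mult.assoc)
    also have "\<dots> \<le> 1 / (2 * L * C3) * lambda_min (Ms k)"
      using K[OF that] Mk.lambda_min_pos by (intro mult_right_mono) auto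
    finally show ?thesis using A4b(1) A3b_const by (simp add: field_simps)
  qed
  then show ?thesis by blast
qed

definition expected_V :: "nat \<Rightarrow> ennreal" where
  "expected_V k = (\<integral>\<^sup>+\<omega>. ennreal (V (iterate k \<omega>)) \<partial>M)"

definition expected_decrease :: "nat \<Rightarrow> ennreal" where
  "expected_decrease k =
    (\<integral>\<^sup>+\<omega>. ennreal (lambda_min (Ms k) / 2 * (norm (Fdot (iterate k \<omega>)))\<^sup>2) \<partial>M)"

lemma V_after_step_pair_measurable:
  "(\<lambda>z. ennreal (V (fst z - Ms k *v fdot (fst z) (snd z)))) \<in> borel_measurable (borel \<Otimes>\<^sub>M P)"
proof -
  have "(\<lambda>z. Ms k *v fdot (fst z) (snd z)) \<in> borel_measurable (borel \<Otimes>\<^sub>M P)"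
    by (rule measurable_compose[OF fdot_pair_measurable borel_measurable_matrix_vector_mult])
  then have "(\<lambda>z. fst z - Ms k *v fdot (fst z) (snd z)) \<in> borel_measurable (borel \<Otimes>\<^sub>M P)"
    by (intro borel_measurable_diff measurable_fst'' measurable_ident_sets) auto
  from measurable_compose[OF this borel_measurable_V] show ?thesis by measurable
qed

lemma borel_measurable_V_next: "V_next k \<in> borel_measurable borel"
proof -
  interpret P: prob_space P by (rule P_prob)
  from P.borel_measurable_nn_integral_fst[OF V_after_step_pair_measurable] show ?thesis
    unfolding V_next_def[abs_def] by simp
qed

lemma borel_measurable_V_iterate: "(\<lambda>\<omega>. ennreal (V (iterate k \<omega>))) \<in> borel_measurable M"
  using measurable_compose[OF borel_measurable_iterate borel_measurable_V] by measurable

lemma borel_measurable_gradient_iterate: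
  "(\<lambda>\<omega>. ennreal (c * (norm (Fdot (iterate k \<omega>)))\<^sup>2)) \<in> borel_measurable M"
  using measurable_compose[OF borel_measurable_iterate borel_measurable_Fdot] by measurable

lemma expected_V_Suc: "expected_V (Suc k) = (\<integral>\<^sup>+\<omega>. V_next k (iterate k \<omega>) \<partial>M)"
  using nn_integral_iterate_next_sample[OF V_after_step_pair_measurable, of k]
  unfolding expected_V_def V_next_def by simp

lemma nn_integral_affine_V:
  assumes "0 \<le> A" "0 \<le> B"
  shows "(\<integral>\<^sup>+\<omega>. ennreal (A * V (iterate k \<omega>) + B) \<partial>M) = ennreal A * expected_V k + ennreal B"
proof -
  have "(\<integral>\<^sup>+\<omega>. ennreal (A * V (iterate k \<omega>) + B) \<partial>M)
      = (\<integral>\<^sup>+\<omega>. ennreal A * ennreal (V (iterate k \<omega>)) + ennreal B \<partial>M)"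
    using assms V_nonneg by (intro nn_integral_cong) (simp add: ennreal_mult)
  also have "\<dots> = ennreal A * expected_V k + ennreal B"
    unfolding expected_V_def using borel_measurable_V_iterate
    by (simp add: nn_integral_add nn_integral_cmult emeasure_space_1)
  finally show ?thesis .
qed

lemma expected_V_finite: "expected_V k < \<infinity>"
proof (induction k)
  case 0
  then show ?case unfolding expected_V_def by (simp add: emeasure_space_1)
next
  case (Suc k)
  define A where "A = 1 + L * step_weight k * (C2 + C3 * grad_sq_const)"
  define B where "B = L * step_weight k * (1 + C1 + C3)"
  have "expected_V (Suc k) \<le> (\<integral>\<^sup>+\<omega>. ennreal (A * V (iterate k \<omega>) + B) \<partial>M)"
    unfolding expected_V_Suc A_def B_def using V_next_le_step_bound step_bound_le
    by (intro nn_integral_mono) (meson ennreal_leI order_trans)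
  also have "\<dots> = ennreal A * expected_V k + ennreal B"
    unfolding A_def B_def using step_weight_nonneg[of k] A4b(1) A3b_const grad_sq_const_pos
    by (intro nn_integral_affine_V) auto
  finally show ?case
    using Suc.IH by (simp add: ennreal_mult_less_top le_less_trans)
qed

lemma expected_V_recursion_late:
  assumes small: "L * C3 * step_weight k \<le> lambda_min (Ms k) / 2"
  shows "expected_V (Suc k) + expected_decrease k
    \<le> ennreal (1 + late_rate * step_weight k) * expected_V k + ennreal (late_rate * step_weight k)"
proof -
  let ?q = "\<lambda>\<omega>. lambda_min (Ms k) / 2 * (norm (Fdot (iterate k \<omega>)))\<^sup>2"
  let ?bound = "\<lambda>\<omega>. (1 + late_rate * step_weight k) * V (iterate k \<omega>) + late_rate * step_weight k"
  have "expected_V (Suc k) + expected_decrease k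
      = (\<integral>\<^sup>+\<omega>. V_next k (iterate k \<omega>) + ennreal (?q \<omega>) \<partial>M)"
    unfolding expected_V_Suc expected_decrease_def
    by (intro nn_integral_add[symmetric] measurable_compose[OF borel_measurable_iterate
          borel_measurable_V_next] borel_measurable_gradient_iterate)
  also have "\<dots> \<le> (\<integral>\<^sup>+\<omega>. ennreal (?bound \<omega>) \<partial>M)"
  proof (rule nn_integral_mono)
    fix \<omega>
    have "V_next k (iterate k \<omega>) + ennreal (?q \<omega>)
        \<le> ennreal (step_bound k (iterate k \<omega>)) + ennreal (?q \<omega>)"
      using V_next_le_step_bound by (rule add_right_mono)
    also have "\<dots> = ennreal (step_bound k (iterate k \<omega>) + ?q \<omega>)"
      using step_bound_nonneg lambda_min_pos[of k] by simp
    also have "\<dots> \<le> ennreal (?bound \<omega>)"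
      using step_bound_le_late[OF small] by (rule ennreal_leI)
    finally show "V_next k (iterate k \<omega>) + ennreal (?q \<omega>) \<le> ennreal (?bound \<omega>)" .
  qed
  also have "\<dots> = ennreal (1 + late_rate * step_weight k) * expected_V k
      + ennreal (late_rate * step_weight k)"
    using step_weight_nonneg[of k] late_rate_nonneg by (intro nn_integral_affine_V) auto
  finally show ?thesis .
qed

lemma summable_weighted_gradients_AE:
  "AE \<omega> in M. summable (\<lambda>k. lambda_min (Ms k) * (norm (Fdot (iterate k \<omega>)))\<^sup>2)"
proof -
  obtain K where K: "\<And>k. K \<le> k \<Longrightarrow> L * C3 * step_weight k \<le> lambda_min (Ms k) / 2"
    using eventually_step_small by blast
  define q where
    "q k \<omega> = ennreal (lambda_min (Ms (k + K)) / 2 * (norm (Fdot (iterate (k + K) \<omega>)))\<^sup>2)"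
    for k \<omega>
  have "(\<Sum>k. expected_decrease (k + K)) < \<infinity>"
  proof (rule suminf_less_top_of_perturbed_recursion[where a = "\<lambda>k. late_rate * step_weight k"])
    show "0 \<le> late_rate * step_weight k" for k
      using late_rate_nonneg step_weight_nonneg by simp
    show "summable (\<lambda>k. late_rate * step_weight k)"
      by (rule summable_mult[OF step_weight_summable])
  qed (use expected_V_finite expected_V_recursion_late[OF K] in auto)
  moreover have "(\<integral>\<^sup>+\<omega>. (\<Sum>k. q k \<omega>) \<partial>M) = (\<Sum>k. expected_decrease (k + K))"
    unfolding q_def expected_decrease_def
    by (intro nn_integral_suminf borel_measurable_gradient_iterate)
  ultimately have "AE \<omega> in M. (\<Sum>k. q k \<omega>) \<noteq> \<infinity>"
    unfolding q_def
    by (intro nn_integral_PInf_AE borel_measurable_suminf_order borel_measurable_gradient_iterate)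
      auto
  then show ?thesis
  proof (rule eventually_mono)
    fix \<omega>
    assume "(\<Sum>k. q k \<omega>) \<noteq> \<infinity>"
    then have "summable (\<lambda>k. lambda_min (Ms (k + K)) / 2 * (norm (Fdot (iterate (k + K) \<omega>)))\<^sup>2)"
      unfolding q_def using lambda_min_pos
      by (intro summable_suminf_not_top) (auto simp: less_imp_le)
    from summable_mult[OF this, of 2]
    have "summable (\<lambda>k. lambda_min (Ms (k + K)) * (norm (Fdot (iterate (k + K) \<omega>)))\<^sup>2)"
      by simp
    then show "summable (\<lambda>k. lambda_min (Ms k) * (norm (Fdot (iterate k \<omega>)))\<^sup>2)"
      by (rule summable_iff_shift[THEN iffD1])
  qed
qed

lemma frequently_small_gradient_AE:
  assumes "0 < \<delta>"
  shows "AE \<omega> in M. \<exists>\<^sub>\<infinity>k. (norm (Fdot (iterate k \<omega>)))\<^sup>2 \<le> \<delta>"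
proof -
  have not_summable: "\<not> summable (\<lambda>k. lambda_min (Ms k))"
    using lambda_min_pos by (intro not_summable_if_partial_sums_at_top[OF _ P3] less_imp_le)
  show ?thesis
    using summable_weighted_gradients_AE
  proof (rule eventually_mono)
    fix \<omega>
    assume "summable (\<lambda>k. lambda_min (Ms k) * (norm (Fdot (iterate k \<omega>)))\<^sup>2)"
    with not_summable show "\<exists>\<^sub>\<infinity>k. (norm (Fdot (iterate k \<omega>)))\<^sup>2 \<le> \<delta>"
      by (intro frequently_le_of_summable_weighted[OF less_imp_le[OF lambda_min_pos]] assms)
  qed
qed

end

theorem mainTheorem14:
  fixes M :: "'w measure" and P :: "'x measure"
    and X :: "nat \<Rightarrow> 'w \<Rightarrow> 'x"
    and f :: "real^'p \<Rightarrow> 'x \<Rightarrow> real"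
    and fdot :: "real^'p \<Rightarrow> 'x \<Rightarrow> real^'p"
    and Fdot :: "real^'p \<Rightarrow> real^'p"
    and Ms :: "nat \<Rightarrow> real^'p^'p"
    and th0 :: "real^'p"
    and \<alpha> Flb C1 C2 C3 L \<delta> :: real
  assumes prob: "prob_space M"
    and P_prob: "prob_space P"
    and X_meas: "\<And>i. X i \<in> measurable M P"
    and X_dist: "\<And>i. i \<ge> 1 \<Longrightarrow> distr M P (X i) = P"
    and X_indep: "prob_space.indep_vars M (\<lambda>_. P) X {1..}"
    and f_diff: "\<And>\<theta> x. x \<in> space P \<Longrightarrow> ((\<lambda>t. f t x) has_derivative (\<lambda>h. fdot \<theta> x \<bullet> h)) (at \<theta>)"
    and fdot_meas: "\<And>\<theta>. fdot \<theta> \<in> borel_measurable P"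
    and F_finite: "\<And>\<theta>. integrable P (f \<theta>)"
    and F_diff: "\<And>\<theta>. ((\<lambda>t. \<integral>x. f t x \<partial>P) has_derivative (\<lambda>h. Fdot \<theta> \<bullet> h)) (at \<theta>)"
    and alpha: "0 < \<alpha>" "\<alpha> \<le> 1"
    and P1: "\<And>k. sym_pos_def_mat (Ms k)"
    and P2: "summable (\<lambda>k. lambda_max (Ms (Suc k)) powr (1 + \<alpha>))"
    and P3: "filterlim (\<lambda>n. \<Sum>k=1..n. lambda_min (Ms k)) at_top at_top"
    and P4: "(\<lambda>k. lambda_max (Ms k) powr \<alpha> * cond_num (Ms k)) \<longlonglongrightarrow> 0"
    and A1: "\<And>\<theta>. (\<integral>x. f \<theta> x \<partial>P) \<ge> Flb"
    and A2: "\<And>\<theta>. has_bochner_integral P (fdot \<theta>) (Fdot \<theta>)"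
    and A3b_const: "C1 \<ge> 0" "C2 \<ge> 0" "C3 \<ge> 1"
    and A3b: "\<And>\<theta>. (\<integral>\<^sup>+ x. ennreal ((norm (fdot \<theta> x))\<^sup>2) \<partial>P)
                 \<le> ennreal (C1 + C2 * ((\<integral>x. f \<theta> x \<partial>P) - Flb) + C3 * (norm (Fdot \<theta>))\<^sup>2)"
    and A4b: "L > 0" "\<And>\<phi>1 \<phi>2. norm (Fdot \<phi>1 - Fdot \<phi>2) \<le> L * norm (\<phi>1 - \<phi>2) powr \<alpha>"
    and delta: "\<delta> > 0"
  shows "AE \<omega> in M. (\<exists>\<^sub>\<infinity>k. (norm (Fdot (sgd_iter th0 Ms fdot X k \<omega>)))\<^sup>2 \<le> \<delta>)"
proof -
  interpret sgd_setting M P X f fdot Fdot Ms th0 \<alpha> Flb C1 C2 C3 L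
    by (rule sgd_setting.intro[OF prob], rule sgd_setting_axioms.intro) (fact assms)+
  show ?thesis by (rule frequently_small_gradient_AE[OF delta])
qed

end
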